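(* Under the full-support assumption, for any $\eta>0$ and any OMWU initialization $\hat{\bm\pi}^{(1)}$ with positive entries, $p(\hat{\bm\pi}^{(1)})=p(\hat{\bm\pi}^{(2)})=\cdots=p(\hat{\bm\pi}^{(t)})$ for all $t\ge1$.
   Context: $\mathbb{A}$ is a finite set, $\Delta(\mathbb{A})$ the probability simplex, $\bm P\in\mathbb{R}^{\mathbb{A}\times\mathbb{A}}$ skew-symmetric. $\mathbb{M}$ is the set of Nash equilibria: ${\bm\pi}\in\Delta(\mathbb{A})$ with $\max_a(\bm P{\bm\pi})_a\le 0$. Full-support assumption: for every $a$ there exists ${\bm\pi}\in\mathbb{M}$ with $\pi_a>0$. For ${\bm\pi}$ with positive entries, $p({\bm\pi})=\arg\min_{{\bm\pi}'\in\mathbb{M}}D_{\mathrm{KL}}({\bm\pi}'\|{\bm\pi})$. OMWU: ${\bm\pi}^{(0)}=\hat{\bm\pi}^{(1)}$, and for $t\ge1$, $\pi^{(t)}_a\propto\hat\pi^{(t)}_a e^{\eta(\bm P{\bm\pi}^{(t-1)})_a}$ and $\hat\pi^{(t+1)}_a\propto\hat\pi^{(t)}_a e^{\eta(\bm P{\bm\pi}^{(t)})_a}$ (each normalized to sum to 1). *)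

theory Defs
  imports Complex_Main
begin

definition mat_vec :: "('a::finite \<Rightarrow> 'a \<Rightarrow> real) \<Rightarrow> ('a \<Rightarrow> real) \<Rightarrow> 'a \<Rightarrow> real" where
  "mat_vec P v a = (\<Sum>b\<in>UNIV. P a b * v b)"

definition skew_symmetric :: "('a \<Rightarrow> 'a \<Rightarrow> real) \<Rightarrow> bool" where
  "skew_symmetric P \<longleftrightarrow> (\<forall>a b. P a b = - P b a)"

definition simplex :: "('a::finite \<Rightarrow> real) set" where
  "simplex = {v. (\<forall>a. 0 \<le> v a) \<and> (\<Sum>a\<in>UNIV. v a) = 1}"

definition nash_set :: "('a::finite \<Rightarrow> 'a \<Rightarrow> real) \<Rightarrow> ('a \<Rightarrow> real) set" where
  "nash_set P = {v \<in> simplex. \<forall>a. mat_vec P v a \<le> 0}"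

definition full_support :: "('a::finite \<Rightarrow> 'a \<Rightarrow> real) \<Rightarrow> bool" where
  "full_support P \<longleftrightarrow> (\<forall>a. \<exists>v\<in>nash_set P. v a > 0)"

text \<open>KL divergence D(q || r) = sum_a q_a ln(q_a / r_a), with 0 ln 0 = 0
  (automatic, since 0 * x = 0).\<close>
definition KL :: "('a::finite \<Rightarrow> real) \<Rightarrow> ('a \<Rightarrow> real) \<Rightarrow> real" where
  "KL q r = (\<Sum>a\<in>UNIV. q a * ln (q a / r a))"

definition kl_proj :: "('a::finite \<Rightarrow> 'a \<Rightarrow> real) \<Rightarrow> ('a \<Rightarrow> real) \<Rightarrow> ('a \<Rightarrow> real)" where
  "kl_proj P r = (THE q. q \<in> nash_set P \<and> (\<forall>q'\<in>nash_set P. KL q r \<le> KL q' r))"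

definition normalize :: "('a::finite \<Rightarrow> real) \<Rightarrow> 'a \<Rightarrow> real" where
  "normalize v a = v a / (\<Sum>b\<in>UNIV. v b)"

text \<open>OMWU state: omwu_state eta P init n = (pi^(n), pihat^(n+1)).\<close>
fun omwu_state :: "real \<Rightarrow> ('a::finite \<Rightarrow> 'a \<Rightarrow> real) \<Rightarrow> ('a \<Rightarrow> real) \<Rightarrow> nat
    \<Rightarrow> ('a \<Rightarrow> real) \<times> ('a \<Rightarrow> real)" where
  "omwu_state eta P init 0 = (init, init)"
| "omwu_state eta P init (Suc n) =
     (let pi_prev = fst (omwu_state eta P init n);
          hat = snd (omwu_state eta P init n);
          pi_new = normalize (\<lambda>a. hat a * exp (eta * mat_vec P pi_prev a));
          hat_new = normalize (\<lambda>a. hat a * exp (eta * mat_vec P pi_new a))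
      in (pi_new, hat_new))"

text \<open>pihat^(t) for t >= 1.\<close>
definition omwu_hat :: "real \<Rightarrow> ('a::finite \<Rightarrow> 'a \<Rightarrow> real) \<Rightarrow> ('a \<Rightarrow> real) \<Rightarrow> nat \<Rightarrow> 'a \<Rightarrow> real" where
  "omwu_hat eta P init t = snd (omwu_state eta P init (t - 1))"

end

theory Submission
  imports Defs
begin

text \<open>Under full support the Nash set contains an interior point, and for a skew-symmetric
  \<open>P\<close> this forces \<open>P q = 0\<close> for every equilibrium \<open>q\<close>. A multiplicative-weights step
  \<open>r \<mapsto> r exp (\<eta> P v) / Z\<close> therefore changes \<open>KL(q \<parallel> r)\<close> by
  \<open>ln Z - \<eta> \<langle>q, P v\<rangle> = ln Z + \<eta> \<langle>v, P q\<rangle> = ln Z\<close>, a constant independent of \<open>q\<close> in the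
  Nash set. So every OMWU update of the auxiliary iterate leaves the set of KL minimisers over
  the Nash set, and hence the projection, unchanged.\<close>

lemma mat_vec_skew_pairing:
  fixes P :: "'a::finite \<Rightarrow> 'a \<Rightarrow> real"
  assumes "skew_symmetric P"
  shows "(\<Sum>a\<in>UNIV. u a * mat_vec P v a) = - (\<Sum>b\<in>UNIV. v b * mat_vec P u b)"
proof -
  have "(\<Sum>a\<in>UNIV. u a * mat_vec P v a) = (\<Sum>a\<in>UNIV. \<Sum>b\<in>UNIV. u a * P a b * v b)"
    by (simp add: mat_vec_def sum_distrib_left mult.assoc)
  also have "\<dots> = (\<Sum>b\<in>UNIV. \<Sum>a\<in>UNIV. u a * P a b * v b)"
    by (rule sum.swap)
  also have "\<dots> = (\<Sum>b\<in>UNIV. \<Sum>a\<in>UNIV. - (v b * P b a * u a))"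
    using assms unfolding skew_symmetric_def
    by (intro sum.cong refl) (metis mult.commute mult_minus_left mult.assoc)
  also have "\<dots> = - (\<Sum>b\<in>UNIV. v b * mat_vec P u b)"
    by (simp add: mat_vec_def sum_distrib_left mult.assoc sum_negf)
  finally show ?thesis .
qed

lemma nonpos_eq_0_if_pos_weighted_sum_eq_0:
  fixes w f :: "'a::finite \<Rightarrow> real"
  assumes "\<And>a. w a > 0" and "\<And>a. f a \<le> 0" and "(\<Sum>a\<in>UNIV. w a * f a) = 0"
  shows "f a = 0"
proof -
  have "(\<Sum>a\<in>UNIV. - (w a * f a)) = 0"
    using assms(3) by (simp add: sum_negf)
  moreover have "- (w a * f a) \<ge> 0" for a
    using assms(1,2)[of a] by (simp add: mult_nonneg_nonpos less_imp_le)
  ultimately have "w a * f a = 0"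
    using sum_nonneg_eq_0_iff[of UNIV "\<lambda>a. - (w a * f a)"] by simp
  then show ?thesis
    using assms(1)[of a] by simp
qed

lemma mean_in_nash_set:
  fixes P :: "'a::finite \<Rightarrow> 'a \<Rightarrow> real" and V :: "'i::finite \<Rightarrow> 'a \<Rightarrow> real"
  assumes V: "\<And>i. V i \<in> nash_set P"
  shows "(\<lambda>b. (\<Sum>i\<in>UNIV. V i b) / real (card (UNIV :: 'i set))) \<in> nash_set P"
proof -
  define n where "n = real (card (UNIV :: 'i set))"
  have "n > 0"
    unfolding n_def by (simp add: finite_UNIV_card_ge_0)
  have "(\<Sum>b\<in>UNIV. (\<Sum>i\<in>UNIV. V i b) / n) = (\<Sum>b\<in>UNIV. \<Sum>i\<in>UNIV. V i b) / n"
    by (simp add: sum_divide_distrib)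
  also have "\<dots> = (\<Sum>i\<in>UNIV. \<Sum>b\<in>UNIV. V i b) / n"
    by (subst sum.swap) (rule refl)
  also have "\<dots> = 1"
    using V \<open>n > 0\<close> by (simp add: nash_set_def simplex_def n_def)
  finally have sum_one: "(\<Sum>b\<in>UNIV. (\<Sum>i\<in>UNIV. V i b) / n) = 1" .
  have payoff: "mat_vec P (\<lambda>b. (\<Sum>i\<in>UNIV. V i b) / n) a \<le> 0" for a
  proof -
    have "mat_vec P (\<lambda>b. (\<Sum>i\<in>UNIV. V i b) / n) a
        = (\<Sum>b\<in>UNIV. \<Sum>i\<in>UNIV. P a b * V i b) / n"
      unfolding mat_vec_def by (simp add: sum_divide_distrib sum_distrib_left)
    also have "\<dots> = (\<Sum>i\<in>UNIV. mat_vec P (V i) a) / n"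
      unfolding mat_vec_def by (subst sum.swap) (rule refl)
    also have "\<dots> \<le> 0"
      using V \<open>n > 0\<close> by (simp add: nash_set_def divide_nonpos_pos sum_nonpos)
    finally show ?thesis .
  qed
  show ?thesis
    using V sum_one payoff
    by (auto simp: nash_set_def simplex_def n_def finite_UNIV_card_ge_0 intro!: divide_nonneg_pos sum_nonneg)
qed

lemma full_support_imp_positive_nash:
  fixes P :: "'a::finite \<Rightarrow> 'a \<Rightarrow> real"
  assumes "full_support P"
  obtains w where "w \<in> nash_set P" and "\<And>a. w a > 0"
proof -
  obtain V where V: "\<And>a. V a \<in> nash_set P" and diag: "\<And>a. V a a > 0"
    using assms unfolding full_support_def by metis
  have nonneg: "V i b \<ge> 0" for i b
    using V[of i] by (simp add: nash_set_def simplex_def)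
  have pos: "(\<Sum>i\<in>UNIV. V i b) / real (card (UNIV :: 'a set)) > 0" for b
    using member_le_sum[of b UNIV "\<lambda>i. V i b"] nonneg diag[of b]
    by (simp add: finite_UNIV_card_ge_0)
  show ?thesis
    by (rule that[OF mean_in_nash_set[OF V] pos])
qed

lemma nash_payoff_eq_0:
  fixes P :: "'a::finite \<Rightarrow> 'a \<Rightarrow> real"
  assumes skew: "skew_symmetric P" and full: "full_support P" and q: "q \<in> nash_set P"
  shows "mat_vec P q a = 0"
proof -
  obtain w where w: "w \<in> nash_set P" and w_pos: "\<And>a. w a > 0"
    using full_support_imp_positive_nash[OF full] by blast
  have "(\<Sum>a\<in>UNIV. w a * mat_vec P w a) = 0"
    using mat_vec_skew_pairing[OF skew, of w w] by linarith
  then have "mat_vec P w b = 0" for b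
    using w by (intro nonpos_eq_0_if_pos_weighted_sum_eq_0[OF w_pos]) (simp_all add: nash_set_def)
  then have "(\<Sum>a\<in>UNIV. w a * mat_vec P q a) = 0"
    using mat_vec_skew_pairing[OF skew, of w q] by simp
  then show ?thesis
    using q by (intro nonpos_eq_0_if_pos_weighted_sum_eq_0[OF w_pos]) (simp_all add: nash_set_def)
qed

lemma KL_normalize_exp:
  fixes q r g :: "'a::finite \<Rightarrow> real"
  assumes q: "q \<in> simplex" and r_pos: "\<And>a. r a > 0"
  shows "KL q (normalize (\<lambda>a. r a * exp (g a)))
      = KL q r + ln (\<Sum>b\<in>UNIV. r b * exp (g b)) - (\<Sum>a\<in>UNIV. q a * g a)"
proof -
  define Z where "Z = (\<Sum>b\<in>UNIV. r b * exp (g b))"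
  have "Z > 0"
    unfolding Z_def using r_pos by (intro sum_pos) auto
  have pointwise: "q a * ln (q a / normalize (\<lambda>a. r a * exp (g a)) a)
      = q a * ln (q a / r a) + q a * ln Z - q a * g a" for a
  proof (cases "q a = 0")
    case False
    moreover have "q a \<ge> 0"
      using q by (simp add: simplex_def)
    ultimately have "q a > 0"
      by simp
    have "q a / normalize (\<lambda>a. r a * exp (g a)) a = (q a / r a) * Z / exp (g a)"
      unfolding normalize_def Z_def[symmetric] using r_pos[of a] \<open>Z > 0\<close> by simp
    then have ln_eq: "ln (q a / normalize (\<lambda>a. r a * exp (g a)) a) = ln (q a / r a) + ln Z - g a"
      using \<open>q a > 0\<close> r_pos[of a] \<open>Z > 0\<close> by (simp add: ln_div ln_mult)
    show ?thesis
      unfolding ln_eq by (simp add: algebra_simps)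
  qed simp
  have "(\<Sum>a\<in>UNIV. q a) = 1"
    using q by (simp add: simplex_def)
  then show ?thesis
    unfolding KL_def pointwise Z_def[symmetric]
    by (simp add: sum.distrib sum_subtractf sum_distrib_right[symmetric])
qed

lemma kl_proj_eqI:
  assumes "\<And>q. q \<in> nash_set P \<Longrightarrow> KL q r' = KL q r + c"
  shows "kl_proj P r' = kl_proj P r"
  unfolding kl_proj_def
  by (rule arg_cong[where f = The], rule ext) (use assms in force)

lemma kl_proj_mwu_step:
  fixes P :: "'a::finite \<Rightarrow> 'a \<Rightarrow> real"
  assumes skew: "skew_symmetric P" and full: "full_support P" and r_pos: "\<And>a. r a > 0"
  shows "kl_proj P (normalize (\<lambda>a. r a * exp (eta * mat_vec P v a))) = kl_proj P r"
proof (rule kl_proj_eqI)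
  fix q assume q: "q \<in> nash_set P"
  have "(\<Sum>a\<in>UNIV. q a * (eta * mat_vec P v a)) = eta * (\<Sum>a\<in>UNIV. q a * mat_vec P v a)"
    by (simp add: sum_distrib_left algebra_simps)
  also have "\<dots> = 0"
    using mat_vec_skew_pairing[OF skew, of q v] nash_payoff_eq_0[OF skew full q] by simp
  finally have "(\<Sum>a\<in>UNIV. q a * (eta * mat_vec P v a)) = 0" .
  then show "KL q (normalize (\<lambda>a. r a * exp (eta * mat_vec P v a)))
      = KL q r + ln (\<Sum>b\<in>UNIV. r b * exp (eta * mat_vec P v b))"
    using KL_normalize_exp[of q r "\<lambda>a. eta * mat_vec P v a"] q r_pos
    unfolding nash_set_def by simp
qed

lemma normalize_exp_pos:
  fixes r :: "'a::finite \<Rightarrow> real"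
  assumes "\<And>a. r a > 0"
  shows "normalize (\<lambda>a. r a * exp (g a)) b > 0"
proof -
  have "(\<Sum>a\<in>UNIV. r a * exp (g a)) > 0"
    using assms by (intro sum_pos) auto
  then show ?thesis
    unfolding normalize_def using assms[of b] by simp
qed

lemma omwu_state_hat_pos:
  assumes "\<And>a. init a > 0"
  shows "snd (omwu_state eta P init n) a > 0"
  using assms by (induction n arbitrary: a) (simp_all add: Let_def normalize_exp_pos)

lemma kl_proj_omwu_state_hat:
  fixes P :: "'a::finite \<Rightarrow> 'a \<Rightarrow> real"
  assumes "skew_symmetric P" and "full_support P" and "\<And>a. init a > 0"
  shows "kl_proj P (snd (omwu_state eta P init n)) = kl_proj P init"
proof (induction n)
  case (Suc n)
  have "\<And>a. snd (omwu_state eta P init n) a > 0"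
    using omwu_state_hat_pos[OF assms(3)] .
  with Suc.IH show ?case
    by (simp add: Let_def kl_proj_mwu_step[OF assms(1,2)])
qed simp

theorem mainTheorem5:
  fixes P :: "'a::finite \<Rightarrow> 'a \<Rightarrow> real" and eta :: real and init :: "'a \<Rightarrow> real"
  assumes "skew_symmetric P"
    and "full_support P"
    and "eta > 0"
    and "\<forall>a. init a > 0"
    and "(\<Sum>a\<in>UNIV. init a) = 1"
  shows "\<forall>t\<ge>1. kl_proj P (omwu_hat eta P init t) = kl_proj P (omwu_hat eta P init 1)"
proof (intro allI impI)
  fix t :: nat
  have "kl_proj P (omwu_hat eta P init t) = kl_proj P init"
    unfolding omwu_hat_def using kl_proj_omwu_state_hat[OF assms(1,2)] assms(4) by blast
  moreover have "omwu_hat eta P init 1 = init"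
    by (simp add: omwu_hat_def)
  ultimately show "kl_proj P (omwu_hat eta P init t) = kl_proj P (omwu_hat eta P init 1)"
    by simp
qed

end
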